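(* Let $c<d$ be real numbers and suppose $\omega$ is nonnegative and nondecreasing on $(c,d]$. Let $K\ge1$ be an integer and $c_1,\dots,c_K\in\mathbb{R}$. For $\rho>0$ let $$E_\rho=\Big\{t\in(c,d]:\ \omega(t)^{K-1}\,\omega(d)\prod_{\ell=1}^K|t-c_\ell|\le\rho^K\Big\}.$$ Then $$\int_{E_\rho}\omega(t)\,dt\le C(K)\,\rho,$$ where $C(K)$ depends only on $K$. *)

theory Defs
  imports "HOL-Analysis.Analysis"
begin

end

theory Submission imports Defs begin

text \<open>Split the sublevel set according to the dyadic level \<open>W/2^(j+1) < \<omega> t \<le> W/2^j\<close>, where
  \<open>W = \<omega> d\<close> bounds \<omega> by monotonicity. On the \<open>j\<close>-th level the defining inequality forces \<open>t\<close>
  to lie within \<open>\<delta>\<^sub>j = (2\<rho>/W) q^(j+1)\<close> of one of the \<open>c\<^sub>l\<close>, where \<open>q = 2^((K-1)/K) < 2\<close>.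
  Hence the integral is at most \<open>\<Sum>\<^sub>j K \<cdot> (W/2^j) \<cdot> 2\<delta>\<^sub>j = 4K\<rho>q \<Sum>\<^sub>j (q/2)^j\<close>,
  a convergent geometric series.\<close>

definition dyadic_ratio :: "nat \<Rightarrow> real" where
  "dyadic_ratio K = 2 powr (real (K - 1) / real K)"

definition dyadic_radius :: "nat \<Rightarrow> real \<Rightarrow> real \<Rightarrow> nat \<Rightarrow> real" where
  "dyadic_radius K W \<rho> j = 2 * \<rho> / W * dyadic_ratio K ^ Suc j"

definition sublevel_const :: "nat \<Rightarrow> real" where
  "sublevel_const K = 4 * real K * dyadic_ratio K / (1 - dyadic_ratio K / 2)"

lemma dyadic_ratio_pos: "0 < dyadic_ratio K"
  by (simp add: dyadic_ratio_def)

lemma dyadic_ratio_less_2: "dyadic_ratio K < 2"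
  unfolding dyadic_ratio_def
  using powr_less_mono[of "real (K - 1) / real K" 1 2] by (cases K) auto

lemma dyadic_ratio_power:
  assumes "K \<ge> 1"
  shows "dyadic_ratio K ^ K = 2 ^ (K - 1)"
proof -
  have "dyadic_ratio K ^ K = 2 powr (real K * (real (K - 1) / real K))"
    unfolding dyadic_ratio_def by (rule powr_power) simp
  also have "\<dots> = 2 powr real (K - 1)"
    using assms by simp
  finally show ?thesis
    by (simp add: powr_realpow)
qed

lemma dyadic_radius_nonneg: "0 < W \<Longrightarrow> 0 < \<rho> \<Longrightarrow> 0 \<le> dyadic_radius K W \<rho> j"
  unfolding dyadic_radius_def
  by (intro mult_nonneg_nonneg divide_nonneg_pos zero_le_power) (auto simp: dyadic_ratio_pos less_imp_le)

text \<open>The radius is calibrated so that at the lower end \<open>W/2^(j+1)\<close> of the \<open>j\<close>-th level a point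
  farther than \<open>\<delta>\<^sub>j\<close> from every \<open>c\<^sub>l\<close> violates the sublevel condition by the factor \<open>2^K\<close>.\<close>

lemma dyadic_radius_identity:
  assumes "K \<ge> 1" "0 < W"
  shows "(W * (1/2) ^ Suc j) ^ (K - 1) * W * dyadic_radius K W \<rho> j ^ K = 2 ^ K * \<rho> ^ K"
proof -
  obtain m where K: "K = Suc m"
    using assms(1) by (cases K) auto
  have scale: "(W * h) ^ m * W * (2 * \<rho> / W * Q) ^ Suc m = 2 ^ Suc m * \<rho> ^ Suc m * (h ^ m * Q ^ Suc m)"
    for h Q :: real
    using assms(2) by (simp add: power_mult_distrib power_divide field_simps)
  have "(dyadic_ratio K ^ Suc j) ^ K = (dyadic_ratio K ^ K) ^ Suc j"
    by (metis power_mult mult.commute)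
  also have "\<dots> = 2 ^ (Suc j * m)"
    using dyadic_ratio_power[OF assms(1)] by (metis K diff_Suc_1 power_mult mult.commute)
  finally have cancel: "((1/2) ^ Suc j) ^ m * (dyadic_ratio K ^ Suc j) ^ K = (1::real)"
    by (simp add: power_mult[symmetric] power_one_over power_add)
  show ?thesis
    unfolding dyadic_radius_def K diff_Suc_1 scale cancel[unfolded K] by simp
qed

lemma exists_dyadic_level:
  fixes r :: real
  assumes "0 < r" "r \<le> 1"
  shows "\<exists>j. (1/2) ^ Suc j < r \<and> r \<le> (1/2) ^ j"
proof -
  have "\<exists>n. (1/2::real) ^ n < r"
    using real_arch_pow_inv[of r "1/2"] assms by auto
  then obtain n where n: "(1/2) ^ n < r" and least: "\<And>k. k < n \<Longrightarrow> \<not> (1/2) ^ k < r"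
    using exists_least_iff[of "\<lambda>n. (1/2::real) ^ n < r"] by blast
  obtain j where "n = Suc j"
    using n assms(2) by (cases n) auto
  then show ?thesis
    using n least[of j] by auto
qed

lemma exists_close_centre:
  fixes a w W \<delta> \<rho> t :: real and cs :: "nat \<Rightarrow> real"
  assumes "0 \<le> a" "a \<le> w" "0 \<le> W" "0 \<le> \<delta>"
    and "w ^ (K - 1) * W * (\<Prod>l=1..K. \<bar>t - cs l\<bar>) \<le> \<rho> ^ K"
    and "\<rho> ^ K < a ^ (K - 1) * W * \<delta> ^ K"
  shows "\<exists>l\<in>{1..K}. \<bar>t - cs l\<bar> \<le> \<delta>"
proof (rule ccontr)
  assume "\<not> ?thesis"
  then have "(\<Prod>l=1..K. \<delta>) \<le> (\<Prod>l=1..K. \<bar>t - cs l\<bar>)"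
    using assms(4) by (intro prod_mono) force
  then have "a ^ (K - 1) * W * \<delta> ^ K \<le> w ^ (K - 1) * W * (\<Prod>l=1..K. \<bar>t - cs l\<bar>)"
    using assms(1-4) by (intro mult_mono power_mono mult_right_mono) auto
  then show False
    using assms(5,6) by linarith
qed

lemma weight_le_dyadic_interval_sum:
  fixes w W \<rho> t :: real and cs :: "nat \<Rightarrow> real"
  assumes "K \<ge> 1" "0 < W" "0 < \<rho>" "0 \<le> w" "w \<le> W"
    and "w ^ (K - 1) * W * (\<Prod>l=1..K. \<bar>t - cs l\<bar>) \<le> \<rho> ^ K"
  defines "\<delta> \<equiv> dyadic_radius K W \<rho>"
  shows "ennreal w \<le> (\<Sum>j. \<Sum>l\<in>{1..K}. ennreal (W * (1/2) ^ j) * indicator {cs l - \<delta> j .. cs l + \<delta> j} t)"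
proof (cases "w = 0")
  case False
  obtain j where j: "(1/2) ^ Suc j < w / W" "w / W \<le> (1/2) ^ j"
    using exists_dyadic_level[of "w / W"] assms(2,4,5) False by auto
  have level: "W * (1/2) ^ Suc j \<le> w" "w \<le> W * (1/2) ^ j"
    using j assms(2) by (simp_all add: field_simps)
  have "\<rho> ^ K < (W * (1/2) ^ Suc j) ^ (K - 1) * W * \<delta> j ^ K"
    using dyadic_radius_identity[OF assms(1,2)] assms(1,3) by (simp add: \<delta>_def)
  then obtain l where l: "l \<in> {1..K}" "\<bar>t - cs l\<bar> \<le> \<delta> j"
    using exists_close_centre[OF _ level(1) _ _ assms(6)] assms(2) dyadic_radius_nonneg[OF assms(2,3)]
    by (force simp: \<delta>_def)
  then have "t \<in> {cs l - \<delta> j .. cs l + \<delta> j}"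
    by (auto simp: abs_le_iff)
  then have "ennreal w \<le> ennreal (W * (1/2) ^ j) * indicator {cs l - \<delta> j .. cs l + \<delta> j} t"
    using level(2) by (simp add: ennreal_leI)
  also have "\<dots> \<le> (\<Sum>l\<in>{1..K}. ennreal (W * (1/2) ^ j) * indicator {cs l - \<delta> j .. cs l + \<delta> j} t)"
    by (rule member_le_sum) (use l in auto)
  also have "\<dots> \<le> (\<Sum>j. \<Sum>l\<in>{1..K}. ennreal (W * (1/2) ^ j) * indicator {cs l - \<delta> j .. cs l + \<delta> j} t)"
    (is "_ \<le> suminf ?g")
    using sum_le_suminf[of ?g "{j}"] by (simp add: summableI)
  finally show ?thesis .
qed simp

lemma nn_integral_suminf_interval_indicators:
  fixes a r :: "nat \<Rightarrow> real" and x :: "'i \<Rightarrow> real" and L :: "'i set"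
  assumes "finite L" "\<And>j. 0 \<le> a j" "\<And>j. 0 \<le> r j"
  shows "(\<integral>\<^sup>+ t. (\<Sum>j. \<Sum>l\<in>L. ennreal (a j) * indicator {x l - r j .. x l + r j} t) \<partial>lborel)
       = (\<Sum>j. ennreal (real (card L) * (a j * (2 * r j))))"
proof -
  have "(\<integral>\<^sup>+ t. (\<Sum>j. \<Sum>l\<in>L. ennreal (a j) * indicator {x l - r j .. x l + r j} t) \<partial>lborel)
      = (\<Sum>j. \<Sum>l\<in>L. \<integral>\<^sup>+ t. ennreal (a j) * indicator {x l - r j .. x l + r j} t \<partial>lborel)"
    by (simp add: nn_integral_suminf nn_integral_sum)
  also have "\<dots> = (\<Sum>j. \<Sum>l\<in>L. ennreal (a j * (2 * r j)))"
    using assms(2,3) by (simp add: nn_integral_cmult_indicator ennreal_mult)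
  also have "\<dots> = (\<Sum>j. ennreal (real (card L) * (a j * (2 * r j))))"
    using assms(2,3) by (simp add: ennreal_mult ennreal_of_nat_eq_real_of_nat)
  finally show ?thesis .
qed

lemma suminf_dyadic_interval_measures:
  assumes "K \<ge> 1" "0 < W" "0 < \<rho>"
  shows "(\<Sum>j. ennreal (real K * (W * (1/2) ^ j * (2 * dyadic_radius K W \<rho> j))))
       = ennreal (sublevel_const K * \<rho>)"
proof (rule suminf_ennreal_eq)
  define q where "q = dyadic_ratio K"
  have q: "0 < q" "q < 2"
    unfolding q_def by (simp_all add: dyadic_ratio_pos dyadic_ratio_less_2)
  have summand: "real K * (W * (1/2) ^ j * (2 * dyadic_radius K W \<rho> j)) = 4 * real K * \<rho> * q * (q/2) ^ j"
    for j
    unfolding dyadic_radius_def q_def[symmetric] using assms(2) by (simp add: field_simps power_divide)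
  have "(\<lambda>j. (q/2) ^ j) sums (1 / (1 - q/2))"
    using q by (intro geometric_sums) simp
  from sums_mult[OF this, of "4 * real K * \<rho> * q"]
  show "(\<lambda>j. real K * (W * (1/2) ^ j * (2 * dyadic_radius K W \<rho> j))) sums (sublevel_const K * \<rho>)"
    unfolding summand sublevel_const_def q_def[symmetric] by (simp add: field_simps)
  show "0 \<le> real K * (W * (1/2) ^ j * (2 * dyadic_radius K W \<rho> j))" for j
    unfolding summand using q assms(3) by simp
qed

lemma nn_integral_sublevel_le:
  fixes \<omega> :: "real \<Rightarrow> real" and cs :: "nat \<Rightarrow> real" and S :: "real set"
  assumes "K \<ge> 1" "0 < \<rho>" "0 \<le> W" "\<And>t. t \<in> S \<Longrightarrow> 0 \<le> \<omega> t \<and> \<omega> t \<le> W"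
  shows "(\<integral>\<^sup>+ t \<in> {t \<in> S. \<omega> t ^ (K - 1) * W * (\<Prod>l=1..K. \<bar>t - cs l\<bar>) \<le> \<rho> ^ K}. ennreal (\<omega> t) \<partial>lborel)
       \<le> ennreal (sublevel_const K * \<rho>)"
    (is "(\<integral>\<^sup>+ t \<in> ?E. _ \<partial>lborel) \<le> _")
proof (cases "W = 0")
  case True
  have "ennreal (\<omega> t) * indicator ?E t = 0" for t
    using assms(4)[of t] True by (cases "t \<in> ?E") auto
  then have "(\<integral>\<^sup>+ t \<in> ?E. ennreal (\<omega> t) \<partial>lborel) = (\<integral>\<^sup>+ t. 0 \<partial>(lborel :: real measure))"
    by (intro nn_integral_cong) simp
  then show ?thesis
    by simp
next
  case False
  then have W: "0 < W"
    using assms(3) by simp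
  define \<delta> where "\<delta> = dyadic_radius K W \<rho>"
  have pointwise: "ennreal (\<omega> t) * indicator ?E t
      \<le> (\<Sum>j. \<Sum>l\<in>{1..K}. ennreal (W * (1/2) ^ j) * indicator {cs l - \<delta> j .. cs l + \<delta> j} t)" for t
  proof (cases "t \<in> ?E")
    case True
    then show ?thesis
      using weight_le_dyadic_interval_sum[OF assms(1) W assms(2), of "\<omega> t" t cs] assms(4)[of t]
      by (simp add: \<delta>_def)
  qed simp
  have "(\<integral>\<^sup>+ t \<in> ?E. ennreal (\<omega> t) \<partial>lborel)
      \<le> (\<integral>\<^sup>+ t. (\<Sum>j. \<Sum>l\<in>{1..K}. ennreal (W * (1/2) ^ j) * indicator {cs l - \<delta> j .. cs l + \<delta> j} t) \<partial>lborel)"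
    by (intro nn_integral_mono pointwise)
  also have "\<dots> = (\<Sum>j. ennreal (real (card {1..K}) * (W * (1/2) ^ j * (2 * \<delta> j))))"
    by (rule nn_integral_suminf_interval_indicators) (use W assms(2) in \<open>simp_all add: \<delta>_def dyadic_radius_nonneg\<close>)
  also have "\<dots> = ennreal (sublevel_const K * \<rho>)"
    unfolding \<delta>_def card_atLeastAtMost diff_Suc_1 by (rule suminf_dyadic_interval_measures[OF assms(1) W assms(2)])
  finally show ?thesis .
qed

theorem lemma2p2:
  fixes K :: nat
  assumes "K \<ge> 1"
  shows "\<exists>C::real. \<forall>(c::real) (d::real) (\<omega>::real \<Rightarrow> real) (cs::nat \<Rightarrow> real) (\<rho>::real).
           c < d \<longrightarrow>
           (\<forall>t\<in>{c<..d}. 0 \<le> \<omega> t) \<longrightarrow>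
           mono_on {c<..d} \<omega> \<longrightarrow>
           \<rho> > 0 \<longrightarrow>
           (\<integral>\<^sup>+ t \<in> {t \<in> {c<..d}. \<omega> t ^ (K - 1) * \<omega> d * (\<Prod>l=1..K. \<bar>t - cs l\<bar>) \<le> \<rho> ^ K}.
               ennreal (\<omega> t) \<partial>lborel) \<le> ennreal (C * \<rho>)"
proof (intro exI[of _ "sublevel_const K"] allI impI)
  fix c d :: real and \<omega> :: "real \<Rightarrow> real" and cs :: "nat \<Rightarrow> real" and \<rho> :: real
  assume "c < d" "\<forall>t\<in>{c<..d}. 0 \<le> \<omega> t" "mono_on {c<..d} \<omega>" "0 < \<rho>"
  moreover have "\<omega> t \<le> \<omega> d" if "t \<in> {c<..d}" for t
    using that \<open>c < d\<close> \<open>mono_on {c<..d} \<omega>\<close> by (auto intro: mono_onD)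
  ultimately show "(\<integral>\<^sup>+ t \<in> {t \<in> {c<..d}. \<omega> t ^ (K - 1) * \<omega> d * (\<Prod>l=1..K. \<bar>t - cs l\<bar>) \<le> \<rho> ^ K}.
      ennreal (\<omega> t) \<partial>lborel) \<le> ennreal (sublevel_const K * \<rho>)"
    by (intro nn_integral_sublevel_le assms) auto
qed

end
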